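(* Let $(V,\varphi,\xi,\eta,g)$, $\mathcal{F}$ and $p_1,\dots,p_4$ be as in the context, and let $F\in\mathcal{F}$ with associated operators $\mathcal{A}_{e_i}$ ($i=1,\dots,2n$), $\mathcal{A}_\xi$. Then, for all $X\in V$ and $i=1,\dots,2n$: (i) $\mathcal{A}_{e_i}X=h(\mathcal{A}_{e_i}hX)$ for all $i,X$ if and only if $F=p_1F$; (ii) $\mathcal{A}_{e_i}X=\eta(\mathcal{A}_{e_i}hX)\xi=-g(\mathcal{A}_\xi hX,\varphi e_i)\xi$ for all $i,X$ if and only if $F=p_2F$; (iii) $\mathcal{A}_{e_i}X=\eta(X)h(\mathcal{A}_{e_i}\xi)$ for all $i,X$ if and only if $F=p_3F$; (iv) $\mathcal{A}_{e_i}X=\eta(X)\eta(\mathcal{A}_{e_i}\xi)\xi=-\eta(X)g(\mathcal{A}_\xi\xi,\varphi e_i)\xi$ for all $i,X$ if and only if $F=p_4F$.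
   Context: Let $V$ be a real vector space of dimension $2n+1$ with an endomorphism $\varphi$, a vector $\xi$ and a linear form $\eta$ such that $\varphi\xi=0$, $\eta\circ\varphi=0$, $\eta(\xi)=1$, $\varphi^2=\mathrm{id}-\eta\otimes\xi$, and such that $\varphi$ restricted to $\mathbb{D}=\ker\eta$ has eigenvalues $\pm1$ with eigenspaces of equal dimension $n$. Let $g$ be a nondegenerate symmetric bilinear form on $V$ with $g(\varphi X,\varphi Y)=-g(X,Y)+\eta(X)\eta(Y)$; then $\eta(X)=g(X,\xi)$. Write $hX=X-\eta(X)\xi$. Fix a basis $\{e_1,\dots,e_{2n}\}$ of $\mathbb{D}$ and write $Y=Y^ie_i+\eta(Y)\xi$. Let $\mathcal{F}$ be the vector space of all $(0,3)$-tensors of the form $F(X,Y,Z)=Y^ig(\mathcal{A}_{e_i}X,Z)+\eta(Y)g(\mathcal{A}_\xi X,\varphi Z)$, where $\mathcal{A}_{e_i}:V\to V$ and $\mathcal{A}_\xi:V\to\mathbb{D}$ are linear maps (the operators associated with $F$) satisfying for all $X$, $i,j$: $g(\mathcal{A}_{e_i}X,e_j)=-g(\mathcal{A}_{e_j}X,e_i)$; $\mathcal{A}_{\varphi e_i}X=-\varphi(\mathcal{A}_{e_i}X)-g(\mathcal{A}_\xi X,e_i)\xi$ (index extended linearly); $\eta(\mathcal{A}_{e_i}X)=-g(\mathcal{A}_\xi X,\varphi e_i)$; $\eta(\mathcal{A}_\xi X)=0$. Define $p_1(F)(X,Y,Z)=F(hX,hY,hZ)$; $p_2(F)(X,Y,Z)=-\eta(Y)F(hX,hZ,\xi)+\eta(Z)F(hX,hY,\xi)$;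 $p_3(F)(X,Y,Z)=\eta(X)F(\xi,hY,hZ)$; $p_4(F)(X,Y,Z)=\eta(X)\eta(Y)F(\xi,\xi,hZ)-\eta(X)\eta(Z)F(\xi,\xi,hY)$. *)

theory Defs
  imports "HOL-Analysis.Analysis"
begin

definition hproj :: "('v::real_vector \<Rightarrow> real) \<Rightarrow> 'v \<Rightarrow> 'v \<Rightarrow> 'v" where
  "hproj \<eta> \<xi> X = X - \<eta> X *\<^sub>R \<xi>"

definition coord :: "nat \<Rightarrow> (nat \<Rightarrow> 'v::real_vector) \<Rightarrow> ('v \<Rightarrow> real) \<Rightarrow> 'v \<Rightarrow> 'v \<Rightarrow> nat \<Rightarrow> real" where
  "coord n e \<eta> \<xi> Y i = representation (e ` {1..2*n}) (hproj \<eta> \<xi> Y) (e i)"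

text \<open>Operator A_Y for Y in V obtained by extending the index i of A_{e_i} linearly.\<close>
definition Aop :: "nat \<Rightarrow> (nat \<Rightarrow> 'v::real_vector) \<Rightarrow> ('v \<Rightarrow> real) \<Rightarrow> 'v
    \<Rightarrow> (nat \<Rightarrow> 'v \<Rightarrow> 'v) \<Rightarrow> 'v \<Rightarrow> 'v \<Rightarrow> 'v" where
  "Aop n e \<eta> \<xi> A Y X = (\<Sum>j\<in>{1..2*n}. coord n e \<eta> \<xi> Y j *\<^sub>R A j X)"

definition Ften :: "nat \<Rightarrow> (nat \<Rightarrow> 'v::real_vector) \<Rightarrow> ('v \<Rightarrow> real) \<Rightarrow> 'v
    \<Rightarrow> ('v \<Rightarrow> 'v) \<Rightarrow> ('v \<Rightarrow> 'v \<Rightarrow> real)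
    \<Rightarrow> (nat \<Rightarrow> 'v \<Rightarrow> 'v) \<Rightarrow> ('v \<Rightarrow> 'v) \<Rightarrow> 'v \<Rightarrow> 'v \<Rightarrow> 'v \<Rightarrow> real" where
  "Ften n e \<eta> \<xi> \<phi> g A A\<xi> X Y Z =
     (\<Sum>i\<in>{1..2*n}. coord n e \<eta> \<xi> Y i * g (A i X) Z) + \<eta> Y * g (A\<xi> X) (\<phi> Z)"

definition p1 :: "('v::real_vector \<Rightarrow> real) \<Rightarrow> 'v \<Rightarrow> ('v \<Rightarrow> 'v \<Rightarrow> 'v \<Rightarrow> real) \<Rightarrow> 'v \<Rightarrow> 'v \<Rightarrow> 'v \<Rightarrow> real" where
  "p1 \<eta> \<xi> F X Y Z = F (hproj \<eta> \<xi> X) (hproj \<eta> \<xi> Y) (hproj \<eta> \<xi> Z)"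

definition p2 :: "('v::real_vector \<Rightarrow> real) \<Rightarrow> 'v \<Rightarrow> ('v \<Rightarrow> 'v \<Rightarrow> 'v \<Rightarrow> real) \<Rightarrow> 'v \<Rightarrow> 'v \<Rightarrow> 'v \<Rightarrow> real" where
  "p2 \<eta> \<xi> F X Y Z = - \<eta> Y * F (hproj \<eta> \<xi> X) (hproj \<eta> \<xi> Z) \<xi>
                      + \<eta> Z * F (hproj \<eta> \<xi> X) (hproj \<eta> \<xi> Y) \<xi>"

definition p3 :: "('v::real_vector \<Rightarrow> real) \<Rightarrow> 'v \<Rightarrow> ('v \<Rightarrow> 'v \<Rightarrow> 'v \<Rightarrow> real) \<Rightarrow> 'v \<Rightarrow> 'v \<Rightarrow> 'v \<Rightarrow> real" where
  "p3 \<eta> \<xi> F X Y Z = \<eta> X * F \<xi> (hproj \<eta> \<xi> Y) (hproj \<eta> \<xi> Z)"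

definition p4 :: "('v::real_vector \<Rightarrow> real) \<Rightarrow> 'v \<Rightarrow> ('v \<Rightarrow> 'v \<Rightarrow> 'v \<Rightarrow> real) \<Rightarrow> 'v \<Rightarrow> 'v \<Rightarrow> 'v \<Rightarrow> real" where
  "p4 \<eta> \<xi> F X Y Z = \<eta> X * \<eta> Y * F \<xi> \<xi> (hproj \<eta> \<xi> Z)
                      - \<eta> X * \<eta> Z * F \<xi> \<xi> (hproj \<eta> \<xi> Y)"

end

theory Submission
  imports Defs
begin

text \<open>Every tensor of the family is recovered from its operators through
  \<open>F X e\<^sub>i Z = g (\<A>\<^sub>i X) Z\<close> and \<open>F X \<xi> Z = g (\<A>\<^sub>\<xi> X) (\<phi> Z)\<close>, and \<open>g\<close> is
  nondegenerate, so each identity \<open>F = p\<^sub>k F\<close> is equivalent to a pointwise identity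
  for the operators \<open>\<A>\<^sub>i\<close>. The \<open>\<xi>\<close>-part of \<open>F\<close> is controlled by the operators
  \<open>\<A>\<^sub>i\<close> as well, because \<open>\<eta> (\<A>\<^sub>i X) = - g (\<A>\<^sub>\<xi> X) (\<phi> e\<^sub>i)\<close> and \<open>\<phi>\<close> kills \<open>\<xi>\<close>.\<close>

locale adapted_frame =
  fixes n :: nat and e :: "nat \<Rightarrow> 'v::real_vector" and \<eta> :: "'v \<Rightarrow> real" and \<xi> :: 'v
    and \<phi> :: "'v \<Rightarrow> 'v" and g :: "'v \<Rightarrow> 'v \<Rightarrow> real"
  assumes linear_phi: "linear \<phi>" and linear_eta: "linear \<eta>"
    and phi_xi: "\<phi> \<xi> = 0" and eta_xi: "\<eta> \<xi> = 1"
    and bilinear_g: "bilinear g" and g_sym: "\<And>X Y. g X Y = g Y X"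
    and g_nondeg: "\<And>X. (\<forall>Y. g X Y = 0) \<Longrightarrow> X = 0"
    and g_phi: "\<And>X Y. g (\<phi> X) (\<phi> Y) = - g X Y + \<eta> X * \<eta> Y"
    and inj_on_e: "inj_on e {1..2*n}"
    and independent_e: "independent (e ` {1..2*n})"
    and span_e: "span (e ` {1..2*n}) = {X. \<eta> X = 0}"
begin

abbreviation h :: "'v \<Rightarrow> 'v" where "h \<equiv> hproj \<eta> \<xi>"

lemmas g_simps =
  bilinear_ladd[OF bilinear_g] bilinear_radd[OF bilinear_g]
  bilinear_lmul[OF bilinear_g] bilinear_rmul[OF bilinear_g]
  bilinear_lsub[OF bilinear_g] bilinear_rsub[OF bilinear_g]
  bilinear_lzero[OF bilinear_g] bilinear_rzero[OF bilinear_g]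
  bilinear_lneg[OF bilinear_g] bilinear_rneg[OF bilinear_g]

lemmas eta_simps =
  linear_add[OF linear_eta] linear_scale[OF linear_eta]
  linear_diff[OF linear_eta] linear_0[OF linear_eta]

lemma g_xi_right: "g X \<xi> = \<eta> X"
  using g_phi[of X \<xi>] by (simp add: phi_xi g_simps eta_xi)

lemma g_xi_left: "g \<xi> X = \<eta> X"
  using g_sym g_xi_right by metis

lemma eta_hproj [simp]: "\<eta> (h X) = 0"
  by (simp add: hproj_def eta_simps eta_xi)

lemma hproj_hproj [simp]: "h (h X) = h X"
  by (simp add: hproj_def[of _ _ "h X"])

lemma hproj_xi [simp]: "h \<xi> = 0"
  by (simp add: hproj_def eta_xi)

lemma phi_hproj [simp]: "\<phi> (h X) = \<phi> X"
  by (simp add: hproj_def linear_diff[OF linear_phi] linear_scale[OF linear_phi] phi_xi)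

lemma g_hproj_left: "g (h U) Z = g U (h Z)"
  by (simp add: hproj_def g_simps g_xi_right g_xi_left)

lemma g_eqI: "(\<And>Z. g U Z = g W Z) \<Longrightarrow> U = W"
  using g_nondeg[of "U - W"] by (simp add: g_simps)

lemma eta_e: "j \<in> {1..2*n} \<Longrightarrow> \<eta> (e j) = 0"
  using span_e span_base[of "e j" "e ` {1..2*n}"] by auto

lemma hproj_e: "j \<in> {1..2*n} \<Longrightarrow> h (e j) = e j"
  by (simp add: hproj_def eta_e)

lemma coord_hproj [simp]: "coord n e \<eta> \<xi> (h Y) = coord n e \<eta> \<xi> Y"
  by (simp add: coord_def fun_eq_iff)

lemma coord_xi [simp]: "coord n e \<eta> \<xi> \<xi> i = 0"
  by (simp add: coord_def representation_zero)

lemma coord_e: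
  assumes "j \<in> {1..2*n}" "i \<in> {1..2*n}"
  shows "coord n e \<eta> \<xi> (e j) i = (if i = j then 1 else 0)"
proof -
  have "coord n e \<eta> \<xi> (e j) i = (if e i = e j then 1 else 0)"
    unfolding coord_def using hproj_e representation_basis[OF independent_e, of "e j"] assms
    by simp
  also have "\<dots> = (if i = j then 1 else 0)"
    using inj_on_e assms by (auto dest: inj_onD)
  finally show ?thesis .
qed

lemma sum_coord_e:
  assumes "j \<in> {1..2*n}"
  shows "(\<Sum>i\<in>{1..2*n}. coord n e \<eta> \<xi> (e j) i * f i) = f j"
proof -
  have "(\<Sum>i\<in>{1..2*n}. coord n e \<eta> \<xi> (e j) i * f i) = (\<Sum>i\<in>{1..2*n}. if i = j then f i else 0)"
    using coord_e[OF assms] by (intro sum.cong) auto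
  then show ?thesis
    using assms by simp
qed

lemma sum_coord_scaleR_e: "(\<Sum>i\<in>{1..2*n}. coord n e \<eta> \<xi> Z i *\<^sub>R e i) = h Z"
proof -
  have "h Z \<in> span (e ` {1..2*n})"
    using span_e by simp
  then have "(\<Sum>b\<in>e ` {1..2*n}. representation (e ` {1..2*n}) (h Z) b *\<^sub>R b) = h Z"
    using sum_representation_eq[OF independent_e] by auto
  then show ?thesis
    unfolding sum.reindex[OF inj_on_e] o_def coord_def .
qed

lemma linear_sum_coord_e:
  "linear l \<Longrightarrow> (\<Sum>i\<in>{1..2*n}. coord n e \<eta> \<xi> Z i * l (e i)) = l (h Z)"
  by (simp add: sum_coord_scaleR_e[symmetric] linear_sum linear_scale)

lemma linear_g_phi: "linear (\<lambda>v. g W (\<phi> v))"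
  using bilinear_g linear_phi unfolding bilinear_def
  by (auto intro: linear_compose[unfolded o_def])

end

locale frame_operators = adapted_frame n e \<eta> \<xi> \<phi> g
  for n and e :: "nat \<Rightarrow> 'v::real_vector" and \<eta> \<xi> \<phi> g +
  fixes A :: "nat \<Rightarrow> 'v \<Rightarrow> 'v" and A\<xi> :: "'v \<Rightarrow> 'v"
  assumes linear_A: "\<And>i. i \<in> {1..2*n} \<Longrightarrow> linear (A i)"
    and linear_Axi: "linear A\<xi>"
    and eta_A: "\<And>X i. i \<in> {1..2*n} \<Longrightarrow> \<eta> (A i X) = - g (A\<xi> X) (\<phi> (e i))"
begin

abbreviation F :: "'v \<Rightarrow> 'v \<Rightarrow> 'v \<Rightarrow> real" where "F \<equiv> Ften n e \<eta> \<xi> \<phi> g A A\<xi>"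

lemma Ften_e: "j \<in> {1..2*n} \<Longrightarrow> F X (e j) Z = g (A j X) Z"
  using sum_coord_e[of j "\<lambda>i. g (A i X) Z"] by (simp add: Ften_def eta_e)

lemma Ften_hproj: "F X (h Y) Z = (\<Sum>i\<in>{1..2*n}. coord n e \<eta> \<xi> Y i * g (A i X) Z)"
  by (simp add: Ften_def)

lemma Ften_xi: "F X \<xi> Z = g (A\<xi> X) (\<phi> Z)"
  by (simp add: Ften_def eta_xi)

lemma sum_coord_eta_A:
  "(\<Sum>i\<in>{1..2*n}. coord n e \<eta> \<xi> Z i * \<eta> (A i W)) = - g (A\<xi> W) (\<phi> Z)"
  using linear_sum_coord_e[OF linear_g_phi, of Z "A\<xi> W"] by (simp add: eta_A sum_negf)

lemma g_Axi_phi_eq_0: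
  "(\<And>i. i \<in> {1..2*n} \<Longrightarrow> \<eta> (A i W) = 0) \<Longrightarrow> g (A\<xi> W) (\<phi> Z) = 0"
  using sum_coord_eta_A[of Z W] by simp

lemma g_Axi_phi_split: "g (A\<xi> X) (\<phi> Z) = g (A\<xi> (h X)) (\<phi> Z) + \<eta> X * g (A\<xi> \<xi>) (\<phi> Z)"
  by (simp add: hproj_def linear_diff[OF linear_Axi] linear_scale[OF linear_Axi] g_simps)

lemma Ften_eq_p1_iff:
  "(\<forall>i\<in>{1..2*n}. \<forall>X. A i X = h (A i (h X))) \<longleftrightarrow> F = p1 \<eta> \<xi> F"
proof
  assume "\<forall>i\<in>{1..2*n}. \<forall>X. A i X = h (A i (h X))"
  then have A_eq: "A i X = h (A i (h X))" if "i \<in> {1..2*n}" for i X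
    using that by blast
  have Axi_vanishes: "g (A\<xi> X) (\<phi> Z) = 0" for X Z
    using A_eq[of _ X] by (intro g_Axi_phi_eq_0) (metis eta_hproj)
  show "F = p1 \<eta> \<xi> F"
  proof (intro ext)
    fix X Y Z
    have "g (A i X) Z = g (A i (h X)) (h Z)" if "i \<in> {1..2*n}" for i
      using A_eq[OF that, of X] by (simp add: g_hproj_left)
    then show "F X Y Z = p1 \<eta> \<xi> F X Y Z"
      by (simp add: p1_def Ften_def Axi_vanishes)
  qed
next
  assume F_eq: "F = p1 \<eta> \<xi> F"
  show "\<forall>i\<in>{1..2*n}. \<forall>X. A i X = h (A i (h X))"
  proof (intro ballI allI g_eqI)
    fix i X Z assume i: "i \<in> {1..2*n}"
    have "g (A i X) Z = p1 \<eta> \<xi> F X (e i) Z"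
      using Ften_e[OF i] F_eq by metis
    also have "\<dots> = g (h (A i (h X))) Z"
      by (simp add: p1_def hproj_e[OF i] Ften_e[OF i] g_hproj_left)
    finally show "g (A i X) Z = g (h (A i (h X))) Z" .
  qed
qed

lemma Ften_eq_p2_iff:
  "(\<forall>i\<in>{1..2*n}. \<forall>X. A i X = \<eta> (A i (h X)) *\<^sub>R \<xi>
      \<and> \<eta> (A i (h X)) *\<^sub>R \<xi> = - g (A\<xi> (h X)) (\<phi> (e i)) *\<^sub>R \<xi>)
    \<longleftrightarrow> F = p2 \<eta> \<xi> F"
proof
  assume "\<forall>i\<in>{1..2*n}. \<forall>X. A i X = \<eta> (A i (h X)) *\<^sub>R \<xi>
      \<and> \<eta> (A i (h X)) *\<^sub>R \<xi> = - g (A\<xi> (h X)) (\<phi> (e i)) *\<^sub>R \<xi>"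
  then have A_eq: "A i X = \<eta> (A i (h X)) *\<^sub>R \<xi>" if "i \<in> {1..2*n}" for i X
    using that by blast
  have "A i \<xi> = 0" if "i \<in> {1..2*n}" for i
    using A_eq[OF that, of \<xi>] linear_0[OF linear_A[OF that]] by (simp add: eta_simps)
  then have "g (A\<xi> \<xi>) (\<phi> Z) = 0" for Z
    by (intro g_Axi_phi_eq_0) (simp add: eta_simps)
  then have Axi_horizontal: "g (A\<xi> X) (\<phi> Z) = g (A\<xi> (h X)) (\<phi> Z)" for X Z
    by (simp add: g_Axi_phi_split[of X Z])
  show "F = p2 \<eta> \<xi> F"
  proof (intro ext)
    fix X Y Z
    have "g (A i X) Z = \<eta> (A i (h X)) * \<eta> Z" if "i \<in> {1..2*n}" for i
      using A_eq[OF that, of X] by (simp add: g_simps g_xi_left)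
    then have "F X Y Z = \<eta> Z * (\<Sum>i\<in>{1..2*n}. coord n e \<eta> \<xi> Y i * \<eta> (A i (h X)))
        + \<eta> Y * g (A\<xi> (h X)) (\<phi> Z)"
      by (simp add: Ften_def Axi_horizontal[of X Z] sum_distrib_left mult_ac)
    also have "\<dots> = p2 \<eta> \<xi> F X Y Z"
      unfolding p2_def Ften_hproj Ften_xi g_xi_right sum_coord_eta_A by simp
    finally show "F X Y Z = p2 \<eta> \<xi> F X Y Z" .
  qed
next
  assume F_eq: "F = p2 \<eta> \<xi> F"
  show "\<forall>i\<in>{1..2*n}. \<forall>X. A i X = \<eta> (A i (h X)) *\<^sub>R \<xi>
      \<and> \<eta> (A i (h X)) *\<^sub>R \<xi> = - g (A\<xi> (h X)) (\<phi> (e i)) *\<^sub>R \<xi>"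
  proof (intro ballI allI conjI)
    fix i X assume i: "i \<in> {1..2*n}"
    show "A i X = \<eta> (A i (h X)) *\<^sub>R \<xi>"
    proof (rule g_eqI)
      fix Z
      have "g (A i X) Z = p2 \<eta> \<xi> F X (e i) Z"
        using Ften_e[OF i] F_eq by metis
      also have "\<dots> = g (\<eta> (A i (h X)) *\<^sub>R \<xi>) Z"
        by (simp add: p2_def hproj_e[OF i] eta_e[OF i] Ften_e[OF i] g_simps g_xi_left g_xi_right)
      finally show "g (A i X) Z = g (\<eta> (A i (h X)) *\<^sub>R \<xi>) Z" .
    qed
    show "\<eta> (A i (h X)) *\<^sub>R \<xi> = - g (A\<xi> (h X)) (\<phi> (e i)) *\<^sub>R \<xi>"
      using i by (simp add: eta_A)
  qed
qed

lemma Ften_eq_p3_iff: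
  "(\<forall>i\<in>{1..2*n}. \<forall>X. A i X = \<eta> X *\<^sub>R h (A i \<xi>)) \<longleftrightarrow> F = p3 \<eta> \<xi> F"
proof
  assume "\<forall>i\<in>{1..2*n}. \<forall>X. A i X = \<eta> X *\<^sub>R h (A i \<xi>)"
  then have A_eq: "A i X = \<eta> X *\<^sub>R h (A i \<xi>)" if "i \<in> {1..2*n}" for i X
    using that by blast
  have Axi_vanishes: "g (A\<xi> X) (\<phi> Z) = 0" for X Z
    by (rule g_Axi_phi_eq_0) (simp add: A_eq[of _ X] eta_simps)
  show "F = p3 \<eta> \<xi> F"
  proof (intro ext)
    fix X Y Z
    have "g (A i X) Z = \<eta> X * g (A i \<xi>) (h Z)" if "i \<in> {1..2*n}" for i
      using A_eq[OF that, of X] by (simp add: g_simps g_hproj_left)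
    then show "F X Y Z = p3 \<eta> \<xi> F X Y Z"
      by (simp add: p3_def Ften_def Axi_vanishes sum_distrib_left mult_ac)
  qed
next
  assume F_eq: "F = p3 \<eta> \<xi> F"
  show "\<forall>i\<in>{1..2*n}. \<forall>X. A i X = \<eta> X *\<^sub>R h (A i \<xi>)"
  proof (intro ballI allI g_eqI)
    fix i X Z assume i: "i \<in> {1..2*n}"
    have "g (A i X) Z = p3 \<eta> \<xi> F X (e i) Z"
      using Ften_e[OF i] F_eq by metis
    also have "\<dots> = g (\<eta> X *\<^sub>R h (A i \<xi>)) Z"
      by (simp add: p3_def hproj_e[OF i] Ften_e[OF i] g_simps g_hproj_left)
    finally show "g (A i X) Z = g (\<eta> X *\<^sub>R h (A i \<xi>)) Z" .
  qed
qed

lemma Ften_eq_p4_iff: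
  "(\<forall>i\<in>{1..2*n}. \<forall>X. A i X = (\<eta> X * \<eta> (A i \<xi>)) *\<^sub>R \<xi>
      \<and> (\<eta> X * \<eta> (A i \<xi>)) *\<^sub>R \<xi> = - (\<eta> X * g (A\<xi> \<xi>) (\<phi> (e i))) *\<^sub>R \<xi>)
    \<longleftrightarrow> F = p4 \<eta> \<xi> F"
proof
  assume "\<forall>i\<in>{1..2*n}. \<forall>X. A i X = (\<eta> X * \<eta> (A i \<xi>)) *\<^sub>R \<xi>
      \<and> (\<eta> X * \<eta> (A i \<xi>)) *\<^sub>R \<xi> = - (\<eta> X * g (A\<xi> \<xi>) (\<phi> (e i))) *\<^sub>R \<xi>"
  then have A_eq: "A i X = (\<eta> X * \<eta> (A i \<xi>)) *\<^sub>R \<xi>" if "i \<in> {1..2*n}" for i X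
    using that by blast
  have "g (A\<xi> (h X)) (\<phi> Z) = 0" for X Z
    by (rule g_Axi_phi_eq_0) (simp add: A_eq[of _ "h X"] eta_simps)
  then have Axi_vertical: "g (A\<xi> X) (\<phi> Z) = \<eta> X * g (A\<xi> \<xi>) (\<phi> Z)" for X Z
    by (simp add: g_Axi_phi_split[of X Z])
  show "F = p4 \<eta> \<xi> F"
  proof (intro ext)
    fix X Y Z
    have "g (A i X) Z = \<eta> X * \<eta> Z * \<eta> (A i \<xi>)" if "i \<in> {1..2*n}" for i
      using A_eq[OF that, of X] by (simp add: g_simps g_xi_left)
    then have "F X Y Z = \<eta> X * \<eta> Z * (\<Sum>i\<in>{1..2*n}. coord n e \<eta> \<xi> Y i * \<eta> (A i \<xi>))
        + \<eta> Y * (\<eta> X * g (A\<xi> \<xi>) (\<phi> Z))"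
      by (simp add: Ften_def Axi_vertical[of X Z] sum_distrib_left mult_ac)
    also have "\<dots> = p4 \<eta> \<xi> F X Y Z"
      unfolding p4_def Ften_xi phi_hproj sum_coord_eta_A by (simp add: algebra_simps)
    finally show "F X Y Z = p4 \<eta> \<xi> F X Y Z" .
  qed
next
  assume F_eq: "F = p4 \<eta> \<xi> F"
  show "\<forall>i\<in>{1..2*n}. \<forall>X. A i X = (\<eta> X * \<eta> (A i \<xi>)) *\<^sub>R \<xi>
      \<and> (\<eta> X * \<eta> (A i \<xi>)) *\<^sub>R \<xi> = - (\<eta> X * g (A\<xi> \<xi>) (\<phi> (e i))) *\<^sub>R \<xi>"
  proof (intro ballI allI conjI)
    fix i X assume i: "i \<in> {1..2*n}"
    show "A i X = (\<eta> X * \<eta> (A i \<xi>)) *\<^sub>R \<xi>"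
    proof (rule g_eqI)
      fix Z
      have "g (A i X) Z = p4 \<eta> \<xi> F X (e i) Z"
        using Ften_e[OF i] F_eq by metis
      also have "\<dots> = g ((\<eta> X * \<eta> (A i \<xi>)) *\<^sub>R \<xi>) Z"
        by (simp add: p4_def hproj_e[OF i] eta_e[OF i] Ften_xi eta_A[OF i] g_simps g_xi_left)
      finally show "g (A i X) Z = g ((\<eta> X * \<eta> (A i \<xi>)) *\<^sub>R \<xi>) Z" .
    qed
    show "(\<eta> X * \<eta> (A i \<xi>)) *\<^sub>R \<xi> = - (\<eta> X * g (A\<xi> \<xi>) (\<phi> (e i))) *\<^sub>R \<xi>"
      using i by (simp add: eta_A)
  qed
qed

end

theorem proposition2p2:
  fixes n :: nat and \<phi> :: "'v::real_vector \<Rightarrow> 'v" and \<xi> :: 'v and \<eta> :: "'v \<Rightarrow> real"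
    and g :: "'v \<Rightarrow> 'v \<Rightarrow> real" and e :: "nat \<Rightarrow> 'v"
    and A :: "nat \<Rightarrow> 'v \<Rightarrow> 'v" and A\<xi> :: "'v \<Rightarrow> 'v"
  assumes dimV: "dim (UNIV :: 'v set) = 2*n + 1"
    and lin_phi: "linear \<phi>" and lin_eta: "linear \<eta>"
    and phi_xi: "\<phi> \<xi> = 0" and eta_phi: "\<And>X. \<eta> (\<phi> X) = 0" and eta_xi: "\<eta> \<xi> = 1"
    and phi2: "\<And>X. \<phi> (\<phi> X) = X - \<eta> X *\<^sub>R \<xi>"
    and eig_plus: "dim {X. \<eta> X = 0 \<and> \<phi> X = X} = n"
    and eig_minus: "dim {X. \<eta> X = 0 \<and> \<phi> X = - X} = n"
    and g_bil: "bilinear g" and g_sym: "\<And>X Y. g X Y = g Y X"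
    and g_nondeg: "\<And>X. (\<forall>Y. g X Y = 0) \<Longrightarrow> X = 0"
    and g_phi: "\<And>X Y. g (\<phi> X) (\<phi> Y) = - g X Y + \<eta> X * \<eta> Y"
    and e_inj: "inj_on e {1..2*n}"
    and e_indep: "independent (e ` {1..2*n})"
    and e_span: "span (e ` {1..2*n}) = {X. \<eta> X = 0}"
    and A_lin: "\<And>i. i \<in> {1..2*n} \<Longrightarrow> linear (A i)"
    and Axi_lin: "linear A\<xi>"
    and A_skew: "\<And>X i j. i \<in> {1..2*n} \<Longrightarrow> j \<in> {1..2*n} \<Longrightarrow>
                  g (A i X) (e j) = - g (A j X) (e i)"
    and A_phi: "\<And>X i. i \<in> {1..2*n} \<Longrightarrow>
                  Aop n e \<eta> \<xi> A (\<phi> (e i)) X = - \<phi> (A i X) - g (A\<xi> X) (e i) *\<^sub>R \<xi>"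
    and A_eta: "\<And>X i. i \<in> {1..2*n} \<Longrightarrow> \<eta> (A i X) = - g (A\<xi> X) (\<phi> (e i))"
    and Axi_eta: "\<And>X. \<eta> (A\<xi> X) = 0"
  defines "F \<equiv> Ften n e \<eta> \<xi> \<phi> g A A\<xi>"
    and "h \<equiv> hproj \<eta> \<xi>"
  shows
    "((\<forall>i\<in>{1..2*n}. \<forall>X. A i X = h (A i (h X))) \<longleftrightarrow> F = p1 \<eta> \<xi> F)
   \<and> ((\<forall>i\<in>{1..2*n}. \<forall>X. A i X = \<eta> (A i (h X)) *\<^sub>R \<xi>
          \<and> \<eta> (A i (h X)) *\<^sub>R \<xi> = - g (A\<xi> (h X)) (\<phi> (e i)) *\<^sub>R \<xi>) \<longleftrightarrow> F = p2 \<eta> \<xi> F)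
   \<and> ((\<forall>i\<in>{1..2*n}. \<forall>X. A i X = \<eta> X *\<^sub>R h (A i \<xi>)) \<longleftrightarrow> F = p3 \<eta> \<xi> F)
   \<and> ((\<forall>i\<in>{1..2*n}. \<forall>X. A i X = (\<eta> X * \<eta> (A i \<xi>)) *\<^sub>R \<xi>
          \<and> (\<eta> X * \<eta> (A i \<xi>)) *\<^sub>R \<xi> = - (\<eta> X * g (A\<xi> \<xi>) (\<phi> (e i))) *\<^sub>R \<xi>)
        \<longleftrightarrow> F = p4 \<eta> \<xi> F)"
proof -
  interpret frame_operators n e \<eta> \<xi> \<phi> g A A\<xi>
    by (rule frame_operators.intro[OF adapted_frame.intro frame_operators_axioms.intro])
      (fact assms)+
  show ?thesis
    unfolding F_def h_def
    using Ften_eq_p1_iff Ften_eq_p2_iff Ften_eq_p3_iff Ften_eq_p4_iff by blast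
qed

end
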